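(* In the setting described in the context, let $\sigma$ be a $\Sigma_m$-proximity on $A$. Then the function $$d(x,y)=\tfrac12\big(\sigma(x,x)+\sigma(y,y)\big)-\sigma(x,y)$$ is a metric on $A$ and belongs to $\mathcal{B}_2$.
   Context: $A$ is a nonempty set (possibly infinite); $m\in\mathbb{R}$. A metric on $A$ is a function $d:A^2\to\mathbb{R}$ such that for all $x,y,z\in A$: $d(x,y)=0$ iff $x=y$, and $d(x,y)+d(x,z)-d(y,z)\ge0$. $\mathcal{B}_1$ is a set of functions $A\to\mathbb{R}$ forming a real linear space containing all constant functions, and $\mu:\mathcal{B}_1\to\mathbb{R}$ is a linear functional with $\mu(c)=c$ for every constant function $c$ and monotone: if $f,g\in\mathcal{B}_1$ and $f\ge g$ pointwise, then $\mu(f)\ge\mu(g)$. For $f:A^2\to\mathbb{R}$ such that $y\mapsto f(x,y)$ lies in $\mathcal{B}_1$ for every $x$, write $f(x,\cdot)=\mu(y\mapsto f(x,y))$. $\mathcal{B}_2$ is a set of functions $A^2\to\mathbb{R}$ forming a real linear space that contains all constant functions and all functions $(x,y)\mapsto h(x)$ and $(x,y)\mapsto h(y)$ with $h\in\mathcal{B}_1$, and such that for every $f\in\mathcal{B}_2$: $y\mapsto f(x,y)\in\mathcal{B}_1$ for every $x$, $x\mapsto f(x,\cdot)\in\mathcal{B}_1$, and $x\mapsto f(x,x)\in\mathcal{B}_1$. A function $\sigma\in\mathcal{B}_2$ is a $\Sigma_m$-proximity on $A$ if for all $x,y,z\in A$: (1) $\sigma(x,\cdot)=m$; (2) $\sigma(x,y)+\sigma(x,z)-\sigma(y,z)\le\sigma(x,x)$,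 with strict inequality whenever $z=y$ and $x\ne y$. *)

theory Defs
  imports Main "HOL.Real"
begin

text \<open>The ground set A is rendered as the (nonempty) universe of the type 'a.\<close>

definition is_metric :: "('a \<Rightarrow> 'a \<Rightarrow> real) \<Rightarrow> bool" where
  "is_metric d \<longleftrightarrow> (\<forall>x y. d x y = 0 \<longleftrightarrow> x = y) \<and>
     (\<forall>x y z. d x y + d x z - d y z \<ge> 0)"

definition real_linear_space :: "('b \<Rightarrow> real) set \<Rightarrow> bool" where
  "real_linear_space S \<longleftrightarrow> (\<lambda>_. 0) \<in> S \<and>
     (\<forall>f\<in>S. \<forall>g\<in>S. (\<lambda>x. f x + g x) \<in> S) \<and>
     (\<forall>c::real. \<forall>f\<in>S. (\<lambda>x. c * f x) \<in> S)"

definition mean_space :: "('a \<Rightarrow> real) set \<Rightarrow> (('a \<Rightarrow> real) \<Rightarrow> real) \<Rightarrow> bool" where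
  "mean_space B1 \<mu> \<longleftrightarrow> real_linear_space B1 \<and>
     (\<forall>c. (\<lambda>_. c) \<in> B1) \<and>
     (\<forall>f\<in>B1. \<forall>g\<in>B1. \<mu> (\<lambda>x. f x + g x) = \<mu> f + \<mu> g) \<and>
     (\<forall>c. \<forall>f\<in>B1. \<mu> (\<lambda>x. c * f x) = c * \<mu> f) \<and>
     (\<forall>c. \<mu> (\<lambda>_. c) = c) \<and>
     (\<forall>f\<in>B1. \<forall>g\<in>B1. (\<forall>x. f x \<ge> g x) \<longrightarrow> \<mu> f \<ge> \<mu> g)"

definition avg2 :: "(('a \<Rightarrow> real) \<Rightarrow> real) \<Rightarrow> ('a \<Rightarrow> 'a \<Rightarrow> real) \<Rightarrow> 'a \<Rightarrow> real" where
  "avg2 \<mu> f x = \<mu> (\<lambda>y. f x y)"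

definition pair_space :: "('a \<Rightarrow> real) set \<Rightarrow> (('a \<Rightarrow> real) \<Rightarrow> real) \<Rightarrow>
    ('a \<Rightarrow> 'a \<Rightarrow> real) set \<Rightarrow> bool" where
  "pair_space B1 \<mu> B2 \<longleftrightarrow>
     (\<forall>f\<in>B2. \<forall>g\<in>B2. (\<lambda>x y. f x y + g x y) \<in> B2) \<and>
     (\<forall>c::real. \<forall>f\<in>B2. (\<lambda>x y. c * f x y) \<in> B2) \<and>
     (\<forall>c. (\<lambda>_ _. c) \<in> B2) \<and>
     (\<forall>h\<in>B1. (\<lambda>x y. h x) \<in> B2 \<and> (\<lambda>x y. h y) \<in> B2) \<and>
     (\<forall>f\<in>B2. (\<forall>x. (\<lambda>y. f x y) \<in> B1) \<and> avg2 \<mu> f \<in> B1 \<and> (\<lambda>x. f x x) \<in> B1)"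

definition sigma_proximity ::
  "(('a \<Rightarrow> real) \<Rightarrow> real) \<Rightarrow> ('a \<Rightarrow> 'a \<Rightarrow> real) set \<Rightarrow> real \<Rightarrow> ('a \<Rightarrow> 'a \<Rightarrow> real) \<Rightarrow> bool" where
  "sigma_proximity \<mu> B2 m \<sigma> \<longleftrightarrow> \<sigma> \<in> B2 \<and>
     (\<forall>x. avg2 \<mu> \<sigma> x = m) \<and>
     (\<forall>x y z. \<sigma> x y + \<sigma> x z - \<sigma> y z \<le> \<sigma> x x) \<and>
     (\<forall>x y. x \<noteq> y \<longrightarrow> \<sigma> x y + \<sigma> x y - \<sigma> y y < \<sigma> x x)"

end

theory Submission
  imports Defs
begin

text \<open>The defect \<open>d x y + d x z - d y z\<close> of the triangle inequality equals
  \<open>\<sigma> x x - \<sigma> x y - \<sigma> x z + \<sigma> y z\<close>, so it is nonnegative by the proximity inequality, and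
  \<open>d x y = 0\<close> for \<open>x \<noteq> y\<close> is excluded by its strict case \<open>z = y\<close>. Membership in B2 is
  linearity.\<close>

lemma is_metric_proximity_distance:
  fixes \<sigma> :: "'a \<Rightarrow> 'a \<Rightarrow> real"
  assumes triangle: "\<And>x y z. \<sigma> x y + \<sigma> x z - \<sigma> y z \<le> \<sigma> x x"
    and strict: "\<And>x y. x \<noteq> y \<Longrightarrow> \<sigma> x y + \<sigma> x y - \<sigma> y y < \<sigma> x x"
  shows "is_metric (\<lambda>x y. (\<sigma> x x + \<sigma> y y) / 2 - \<sigma> x y)"
  unfolding is_metric_def
proof (intro conjI allI)
  fix x y
  show "(\<sigma> x x + \<sigma> y y) / 2 - \<sigma> x y = 0 \<longleftrightarrow> x = y"
    using strict[of x y] by (cases "x = y") auto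
next
  fix x y z
  show "0 \<le> (\<sigma> x x + \<sigma> y y) / 2 - \<sigma> x y + ((\<sigma> x x + \<sigma> z z) / 2 - \<sigma> x z)
      - ((\<sigma> y y + \<sigma> z z) / 2 - \<sigma> y z)"
    using triangle[of x y z] by (simp add: field_simps)
qed

lemma pair_space_diff:
  assumes B2: "pair_space B1 \<mu> B2" and "f \<in> B2" "g \<in> B2"
  shows "(\<lambda>x y. f x y - g x y) \<in> B2"
proof -
  have add: "\<And>f g. f \<in> B2 \<Longrightarrow> g \<in> B2 \<Longrightarrow> (\<lambda>x y. f x y + g x y) \<in> B2"
    and scale: "\<And>c f. f \<in> B2 \<Longrightarrow> (\<lambda>x y. c * f x y) \<in> B2"
    using B2 unfolding pair_space_def by blast+
  have "(\<lambda>x y. f x y + (-1) * g x y) \<in> B2"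
    using add[OF \<open>f \<in> B2\<close> scale[OF \<open>g \<in> B2\<close>]] .
  then show ?thesis by simp
qed

lemma pair_space_half_diagonal_sum:
  assumes B2: "pair_space B1 \<mu> B2" and "f \<in> B2"
  shows "(\<lambda>x y. (f x x + f y y) / 2) \<in> B2"
proof -
  have add: "\<And>f g. f \<in> B2 \<Longrightarrow> g \<in> B2 \<Longrightarrow> (\<lambda>x y. f x y + g x y) \<in> B2"
    and scale: "\<And>c f. f \<in> B2 \<Longrightarrow> (\<lambda>x y. c * f x y) \<in> B2"
    and lift: "\<And>h. h \<in> B1 \<Longrightarrow> (\<lambda>x y. h x) \<in> B2 \<and> (\<lambda>x y. h y) \<in> B2"
    and diagonal: "(\<lambda>x. f x x) \<in> B1"
    using B2 \<open>f \<in> B2\<close> unfolding pair_space_def by blast+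
  have "(\<lambda>x y. (1 / 2) * (f x x + f y y)) \<in> B2"
    using scale[OF add] lift[OF diagonal] by blast
  then show ?thesis by simp
qed

theorem proposition3:
  fixes B1 :: "('a \<Rightarrow> real) set" and \<mu> :: "('a \<Rightarrow> real) \<Rightarrow> real"
    and B2 :: "('a \<Rightarrow> 'a \<Rightarrow> real) set" and m :: real
    and \<sigma> :: "'a \<Rightarrow> 'a \<Rightarrow> real"
  assumes "mean_space B1 \<mu>"
    and "pair_space B1 \<mu> B2"
    and "sigma_proximity \<mu> B2 m \<sigma>"
  shows "is_metric (\<lambda>x y. (\<sigma> x x + \<sigma> y y) / 2 - \<sigma> x y)
    \<and> (\<lambda>x y. (\<sigma> x x + \<sigma> y y) / 2 - \<sigma> x y) \<in> B2"
proof
  have \<sigma>: "\<sigma> \<in> B2"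
    and triangle: "\<And>x y z. \<sigma> x y + \<sigma> x z - \<sigma> y z \<le> \<sigma> x x"
    and strict: "\<And>x y. x \<noteq> y \<Longrightarrow> \<sigma> x y + \<sigma> x y - \<sigma> y y < \<sigma> x x"
    using assms(3) unfolding sigma_proximity_def by auto
  show "is_metric (\<lambda>x y. (\<sigma> x x + \<sigma> y y) / 2 - \<sigma> x y)"
    using triangle strict by (rule is_metric_proximity_distance)
  show "(\<lambda>x y. (\<sigma> x x + \<sigma> y y) / 2 - \<sigma> x y) \<in> B2"
    using pair_space_diff[OF assms(2) pair_space_half_diagonal_sum[OF assms(2) \<sigma>] \<sigma>] .
qed

end
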